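(* Let $n\ge 2$, let $k_1,\dots,k_n$ be positive integers with $\sum_{i=1}^n\frac1{k_i}=1$, $k=\operatorname{lcm}(k_1,\dots,k_n)$, $w_i=k/k_i$, and $P(x_1,\dots,x_{n-1})=\sum_{i=1}^{n-1}x_i^{k_i}+1$. Fix $\epsilon_1,\dots,\epsilon_{n-1}>0$ and let $C_\epsilon=\{|x_1|=\epsilon_1,\dots,|x_{n-1}|=\epsilon_{n-1}\}$. Let $\psi\in\mathbb{C}$ with $\xi=\psi^{-1}$ satisfying $|\xi|\cdot\sup_{C_\epsilon}\big|\frac{P}{k x_1\cdots x_{n-1}}\big|<1$, and set $$\tilde M=\exp\Big(-\frac{1}{(2\pi i)^{n-1}}\oint_{C_\epsilon}\Big[\log\psi+\log\Big(1-\xi\frac{P(x_1,\dots,x_{n-1})}{k x_1\cdots x_{n-1}}\Big)\Big]\frac{dx_1}{x_1}\cdots\frac{dx_{n-1}}{x_{n-1}}\Big),$$ with the principal branch for the second logarithm. Then $$\tilde M=\xi\exp\Big(\sum_{m\ge1}c_m\frac{\xi^m}{mk^m}\Big),\qquad c_m=\begin{cases}\dfrac{m!}{\prod_{i=1}^n (m/k_i)!},& k\mid m,\\[2mm] 0,&\text{otherwise},\end{cases}$$ where $c_m$ is the coefficient of $x_1^m\cdots x_{n-1}^m$ in $P^m$. Consequently, with $z=\xi^k/k^k$, one has $\tilde M^k/k^k=z\exp\big(\sum_{m\ge1}\frac{(km)!}{\prod_{i=1}^n(w_im)!}\frac{z^m}{m}\big)$, which is independent of $\epsilon_1,\dots,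\epsilon_{n-1}$.
   Context: The value of $\exp(-\log\psi)=\psi^{-1}$ does not depend on the branch chosen for $\log\psi$. *)

theory Defs
  imports "HOL-Analysis.Analysis"
begin

text \<open>The contour integral over the torus
  C_eps = {|x_j| = eps_j, j < N}, i.e. the iterated integral of
  f(x) dx_0 ... dx_{N-1}, computed via the standard counterclockwise
  parametrisation x_j = eps_j e^{i theta_j}, theta_j in [0, 2 pi].\<close>
definition torus_contour_integral ::
  "nat \<Rightarrow> (nat \<Rightarrow> real) \<Rightarrow> ((nat \<Rightarrow> complex) \<Rightarrow> complex) \<Rightarrow> complex" where
  "torus_contour_integral N eps f =
     integral\<^sup>L (PiM {..<N} (\<lambda>_. restrict_space lborel {0..2*pi}))
       (\<lambda>\<theta>. f (\<lambda>j. if j < N then complex_of_real (eps j) * exp (\<i> * complex_of_real (\<theta> j)) else 0)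
             * (\<Prod>j<N. \<i> * complex_of_real (eps j) * exp (\<i> * complex_of_real (\<theta> j))))"

definition torus :: "nat \<Rightarrow> (nat \<Rightarrow> real) \<Rightarrow> (nat \<Rightarrow> complex) set" where
  "torus N eps = {x. (\<forall>j<N. cmod (x j) = eps j) \<and> (\<forall>j\<ge>N. x j = 0)}"

definition fermatP :: "nat \<Rightarrow> (nat \<Rightarrow> nat) \<Rightarrow> (nat \<Rightarrow> complex) \<Rightarrow> complex" where
  "fermatP n k x = (\<Sum>i<n-1. x i ^ k i) + 1"

definition lcmk :: "nat \<Rightarrow> (nat \<Rightarrow> nat) \<Rightarrow> nat" where
  "lcmk n k = Lcm (k ` {..<n})"

definition coeff_c :: "nat \<Rightarrow> (nat \<Rightarrow> nat) \<Rightarrow> nat \<Rightarrow> real" where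
  "coeff_c n k m = (if lcmk n k dvd m
      then fact m / (\<Prod>i<n. fact (m div k i)) else 0)"

end

theory Submission
  imports Defs "HOL-Combinatorics.Multiset_Permutations"
begin

(* Parametrise the torus C_eps by x_j = eps_j e^{i theta_j}; the normalised contour integral of
   (L + Ln(1 - xi g(x))) / (x_1 ... x_N), with g = P / (k x_1 ... x_N), becomes L plus the mean
   of theta |-> Ln(1 - xi g(x(theta))) over the cube [0, 2 pi]^N.  Since |xi g| <= r < 1 on the
   torus, the logarithmic series Ln(1 - w) = - sum_m w^m / m may be integrated term by term.
   Expanding g^m = (sum_i y_i)^m over words of length m in the letters y_i = x_i^{k_i}
   (i < N) and y_N = 1, every word contributes a Fourier monomial, and its mean vanishes
   unless each letter i < N occurs exactly m / k_i times.  By sum 1/k_i = 1 the last letter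
   then occurs m / k_N times, so the mean of g^m is c_m / k^m, where c_m is the multinomial
   coefficient counting such words (zero unless lcm(k_i) divides m).  This yields the first
   formula; the second is the reindexing m = k j of the sparse series, with z = xi^k / k^k. *)

definition letter_count :: "nat \<Rightarrow> (nat \<Rightarrow> nat) \<Rightarrow> nat \<Rightarrow> nat" where
  "letter_count m w i = card {t\<in>{..<m}. w t = i}"

lemma count_mset_word: "count (mset (map w [0..<m])) i = letter_count m w i"
proof -
  have "count (mset (map w [0..<m])) i = length (filter ((=) i) (map w [0..<m]))"
    by (simp only: count_mset count_list_eq_length_filter)
  also have "\<dots> = card {t. t < m \<and> i = w t}"
    unfolding length_filter_conv_card by (intro arg_cong[where f=card]) auto
  also have "{t. t < m \<and> i = w t} = {t\<in>{..<m}. w t = i}" by auto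
  finally show ?thesis unfolding letter_count_def .
qed

lemma sum_letter_count:
  assumes "w \<in> PiE {..<m} (\<lambda>_. {..<n})"
  shows "(\<Sum>i<n. letter_count m w i) = m"
proof -
  have "(\<Sum>i<n. sum (\<lambda>_. 1::nat) {t\<in>{..<m}. w t = i}) = sum (\<lambda>_. 1) {..<m}"
    using assms by (intro sum.group) auto
  then show ?thesis unfolding letter_count_def by simp
qed

definition letter_multiset :: "nat \<Rightarrow> (nat \<Rightarrow> nat) \<Rightarrow> nat multiset" where
  "letter_multiset n a = (\<Sum>i<n. replicate_mset (a i) i)"

lemma count_letter_multiset: "count (letter_multiset n a) j = (if j < n then a j else 0)"
  unfolding letter_multiset_def by (induction n) auto

lemma size_letter_multiset: "size (letter_multiset n a) = (\<Sum>i<n. a i)"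
  unfolding letter_multiset_def by (induction n) auto

lemma set_letter_multiset: "set_mset (letter_multiset n a) \<subseteq> {..<n}"
  using count_letter_multiset[of n a] by (auto simp: set_mset_def split: if_splits)

lemma mset_word_iff_letter_counts:
  assumes w: "w \<in> PiE {..<m} (\<lambda>_. {..<n})"
  shows "mset (map w [0..<m]) = letter_multiset n a \<longleftrightarrow> (\<forall>i<n. letter_count m w i = a i)"
proof
  assume "mset (map w [0..<m]) = letter_multiset n a"
  then show "\<forall>i<n. letter_count m w i = a i"
    by (metis count_letter_multiset count_mset_word)
next
  assume counts: "\<forall>i<n. letter_count m w i = a i"
  show "mset (map w [0..<m]) = letter_multiset n a"
  proof (rule multiset_eqI)
    fix j
    show "count (mset (map w [0..<m])) j = count (letter_multiset n a) j"
    proof (cases "j < n")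
      case True
      then show ?thesis using counts by (metis count_letter_multiset count_mset_word)
    next
      case False
      then have "j \<notin> set (map w [0..<m])" using w by (auto simp: PiE_def Pi_def)
      then show ?thesis using False by (metis count_letter_multiset count_mset_0_iff set_mset_mset)
    qed
  qed
qed

lemma words_permutations_bij:
  assumes "(\<Sum>i<n. a i) = m"
  shows "bij_betw (\<lambda>w. map w [0..<m]) {w \<in> PiE {..<m} (\<lambda>_. {..<n}). \<forall>i<n. letter_count m w i = a i}
           (permutations_of_multiset (letter_multiset n a))"
proof (rule bij_betw_byWitness[where f' = "\<lambda>xs t. if t < m then xs ! t else undefined"])
  have len: "length xs = m" if "xs \<in> permutations_of_multiset (letter_multiset n a)" for xs :: "nat list"
    using that assms size_letter_multiset[of n a]
    by (metis mem_Collect_eq permutations_of_multiset_def size_mset)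
  show "\<forall>w\<in>{w \<in> PiE {..<m} (\<lambda>_. {..<n}). \<forall>i<n. letter_count m w i = a i}.
          (\<lambda>t. if t < m then map w [0..<m] ! t else undefined) = w"
    by (auto simp: PiE_def extensional_def)
  show "\<forall>xs\<in>permutations_of_multiset (letter_multiset n a).
          map (\<lambda>t. if t < m then xs ! t else undefined) [0..<m] = xs"
    using len by (auto intro: nth_equalityI)
  show "(\<lambda>w. map w [0..<m]) ` {w \<in> PiE {..<m} (\<lambda>_. {..<n}). \<forall>i<n. letter_count m w i = a i}
          \<subseteq> permutations_of_multiset (letter_multiset n a)"
    using mset_word_iff_letter_counts by (auto simp: permutations_of_multiset_def)
  show "(\<lambda>xs t. if t < m then xs ! t else undefined) ` permutations_of_multiset (letter_multiset n a)
          \<subseteq> {w \<in> PiE {..<m} (\<lambda>_. {..<n}). \<forall>i<n. letter_count m w i = a i}"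
  proof clarify
    fix xs assume xs: "xs \<in> permutations_of_multiset (letter_multiset n a)"
    define w where "w = (\<lambda>t. if t < m then xs ! t else undefined)"
    have A: "mset xs = letter_multiset n a" using xs by (simp add: permutations_of_multiset_def)
    have "map w [0..<m] = xs" using len[OF xs] by (auto simp: w_def intro: nth_equalityI)
    moreover have "w \<in> PiE {..<m} (\<lambda>_. {..<n})"
    proof -
      have "xs ! t \<in> set_mset (letter_multiset n a)" if "t < m" for t
        using that len[OF xs] A by (metis nth_mem set_mset_mset)
      then show ?thesis
        using set_letter_multiset by (auto simp: w_def PiE_def Pi_def extensional_def)
    qed
    ultimately show "w \<in> PiE {..<m} (\<lambda>_. {..<n}) \<and> (\<forall>i<n. letter_count m w i = a i)"
      using A mset_word_iff_letter_counts by metis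
  qed
qed

lemma card_words_with_counts:
  assumes "(\<Sum>i<n. a i) = m"
  shows "card {w \<in> PiE {..<m} (\<lambda>_. {..<n}). \<forall>i<n. letter_count m w i = a i}
           = fact m div (\<Prod>i<n. fact (a i))"
    and "(\<Prod>i<n. fact (a i) :: nat) dvd fact m"
proof -
  define A where "A = letter_multiset n a"
  have sA: "size A = m" unfolding A_def using assms size_letter_multiset by simp
  have "(\<Prod>x\<in>set_mset A. fact (count A x)) = (\<Prod>x\<in>set_mset A. fact (a x) :: nat)"
    using set_letter_multiset[of n a] by (intro prod.cong) (auto simp: A_def count_letter_multiset)
  also have "\<dots> = (\<Prod>i<n. fact (a i))"
    using set_letter_multiset[of n a]
    by (intro prod.mono_neutral_left) (auto simp: A_def count_letter_multiset set_mset_def)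
  finally have pr: "(\<Prod>x\<in>set_mset A. fact (count A x)) = (\<Prod>i<n. fact (a i) :: nat)" .
  show "card {w \<in> PiE {..<m} (\<lambda>_. {..<n}). \<forall>i<n. letter_count m w i = a i}
          = fact m div (\<Prod>i<n. fact (a i))"
    using bij_betw_same_card[OF words_permutations_bij[OF assms]]
      card_permutations_of_multiset(1)[of A] pr sA by (simp add: A_def)
  show "(\<Prod>i<n. fact (a i) :: nat) dvd fact m"
    using card_permutations_of_multiset(2)[of A] pr sA by simp
qed

lemma balanced_last_letter:
  assumes kpos: "\<forall>i<Suc N. k i > 0" and ksum: "(\<Sum>i<Suc N. 1 / real (k i)) = 1"
    and w: "w \<in> PiE {..<m} (\<lambda>_. {..<Suc N})"
    and balanced: "\<forall>i<N. k i * letter_count m w i = m"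
  shows "k N * letter_count m w N = m"
proof -
  have count_i: "real (letter_count m w i) = real m / real (k i)" if "i < N" for i
  proof -
    have "real (k i) * real (letter_count m w i) = real m"
      using balanced that by (metis of_nat_mult)
    then show ?thesis using kpos that by (simp add: field_simps)
  qed
  have "real (letter_count m w N) = real m - (\<Sum>i<N. real (letter_count m w i))"
    using sum_letter_count[OF w] by (simp flip: of_nat_sum)
  also have "\<dots> = real m * (1 - (\<Sum>i<N. 1 / real (k i)))"
    using count_i by (simp add: sum_distrib_left algebra_simps)
  also have "1 - (\<Sum>i<N. 1 / real (k i)) = 1 / real (k N)"
    using ksum by simp
  finally have "real (k N) * real (letter_count m w N) = real m"
    using kpos by (simp add: field_simps)
  then show ?thesis by (metis of_nat_eq_iff of_nat_mult)
qed

lemma lcmk_pos: "\<forall>i<n. k i > 0 \<Longrightarrow> lcmk n k > 0"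
  unfolding lcmk_def by (metis Lcm_0_iff finite_imageI finite_lessThan gr0I imageE lessThan_iff
      not_less_zero)

lemma dvd_lcmk_iff: "lcmk n k dvd m \<longleftrightarrow> (\<forall>i<n. k i dvd m)"
  unfolding lcmk_def by (auto intro: Lcm_least dvd_trans[OF dvd_Lcm])

lemma card_balanced_words:
  assumes kpos: "\<forall>i<Suc N. k i > 0" and ksum: "(\<Sum>i<Suc N. 1 / real (k i)) = 1"
  shows "real (card {w\<in>PiE {..<m} (\<lambda>_. {..<Suc N}). \<forall>i<N. k i * letter_count m w i = m})
           = coeff_c (Suc N) k m"
proof -
  define W where "W = PiE {..<m} (\<lambda>_. {..<Suc N})"
  have all_letters: "{w\<in>W. \<forall>i<N. k i * letter_count m w i = m}
                     = {w\<in>W. \<forall>i<Suc N. k i * letter_count m w i = m}"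
    using balanced_last_letter[OF kpos ksum] by (auto simp: W_def less_Suc_eq)
  show ?thesis
  proof (cases "lcmk (Suc N) k dvd m")
    case True
    define a where "a i = m div k i" for i
    have kd: "k i dvd m" if "i < Suc N" for i using True that dvd_lcmk_iff by blast
    have "k i * c = m \<longleftrightarrow> c = a i" if "i < Suc N" for i c
      using kd[OF that] kpos that unfolding a_def by auto
    then have counts: "{w\<in>W. \<forall>i<N. k i * letter_count m w i = m}
                       = {w\<in>W. \<forall>i<Suc N. letter_count m w i = a i}"
      unfolding all_letters by auto
    have "real (\<Sum>i<Suc N. a i) = (\<Sum>i<Suc N. real m * (1 / real (k i)))"
      unfolding of_nat_sum a_def by (rule sum.cong) (auto simp: real_of_nat_div kd)
    also have "\<dots> = real m * (\<Sum>i<Suc N. 1 / real (k i))" by (simp only: sum_distrib_left)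
    also have "\<dots> = real m" using ksum by simp
    finally have asum: "(\<Sum>i<Suc N. a i) = m" by (simp only: of_nat_eq_iff)
    have "real (card {w\<in>W. \<forall>i<N. k i * letter_count m w i = m})
          = real (fact m div (\<Prod>i<Suc N. fact (a i)))"
      unfolding counts unfolding W_def card_words_with_counts(1)[OF asum] ..
    also have "\<dots> = fact m / (\<Prod>i<Suc N. fact (a i))"
      using card_words_with_counts(2)[OF asum] by (simp add: real_of_nat_div of_nat_prod)
    also have "\<dots> = coeff_c (Suc N) k m"
      using True by (simp add: coeff_c_def a_def)
    finally show ?thesis unfolding W_def .
  next
    case False
    have "\<not> (\<forall>i<Suc N. k i * letter_count m w i = m)" for w
      using False dvd_lcmk_iff by (metis dvd_triv_left)
    then have "{w\<in>W. \<forall>i<N. k i * letter_count m w i = m} = {}"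
      unfolding all_letters by blast
    then have "card {w\<in>W. \<forall>i<N. k i * letter_count m w i = m} = 0" by (simp only: card.empty)
    then show ?thesis using False unfolding W_def coeff_c_def by simp
  qed
qed

definition circle_measure :: "real measure" where
  "circle_measure = restrict_space lborel {0..2*pi}"

definition torus_measure :: "nat \<Rightarrow> (nat \<Rightarrow> real) measure" where
  "torus_measure N = PiM {..<N} (\<lambda>_. circle_measure)"

lemma finite_measure_circle: "finite_measure circle_measure"
  unfolding circle_measure_def
  by (intro finite_measureI) (simp add: emeasure_restrict_space space_restrict_space)

lemma product_sigma_finite_circle: "product_sigma_finite (\<lambda>_::nat. circle_measure)"
  unfolding product_sigma_finite_def using finite_measure_circle finite_measure.axioms(1) by blast

lemma emeasure_torus_space:
  "emeasure (torus_measure N) (space (torus_measure N)) = ennreal ((2*pi)^N)"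
proof -
  have "emeasure circle_measure (space circle_measure) = ennreal (2*pi)"
    unfolding circle_measure_def by (simp add: emeasure_restrict_space space_restrict_space)
  then show ?thesis
    unfolding torus_measure_def space_PiM
    by (simp add: product_sigma_finite.emeasure_PiM[OF product_sigma_finite_circle]
                  prod_ennreal ennreal_power)
qed

lemma finite_measure_torus: "finite_measure (torus_measure N)"
  by (intro finite_measureI) (simp add: emeasure_torus_space)

lemma measure_torus_space: "measure (torus_measure N) (space (torus_measure N)) = (2*pi)^N"
  by (simp add: measure_def emeasure_torus_space)

lemma integrable_circle_exp: "integrable circle_measure (\<lambda>t. exp (\<i> * of_int d * of_real t))"
proof (rule finite_measure.integrable_const_bound[OF finite_measure_circle, where B=1])
  show "AE x in circle_measure. norm (exp (\<i> * of_int d * of_real x)) \<le> 1"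
    by (simp add: norm_exp_i_times[of "of_int d * x", simplified])
  show "(\<lambda>t. exp (\<i> * of_int d * complex_of_real t)) \<in> borel_measurable circle_measure"
    unfolding circle_measure_def by (intro measurable_restrict_space1) measurable
qed

lemma integral_circle_exp:
  "integral\<^sup>L circle_measure (\<lambda>t. exp (\<i> * of_int d * of_real t)) = (if d = 0 then 2*pi else 0)"
proof (cases "d = 0")
  case True
  then show ?thesis
    by (simp add: circle_measure_def measure_restrict_space space_restrict_space scaleR_conv_of_real)
next
  case False
  have "integral\<^sup>L circle_measure (\<lambda>t. exp (\<i> * of_int d * of_real t))
        = (LBINT t=ereal 0..ereal (2*pi). exp (\<i> * of_int d * of_real t))"
    unfolding circle_measure_def interval_integral_Icc[of 0 "2*pi", simplified]
    by (simp add: integral_restrict_space set_lebesgue_integral_def)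
  also have "\<dots> = exp (\<i> * of_int d * of_real (2*pi)) / (\<i> * of_int d)
                  - exp (\<i> * of_int d * of_real 0) / (\<i> * of_int d)"
  proof (rule interval_integral_FTC_finite)
    show "continuous_on {min 0 (2 * pi)..max 0 (2 * pi)} (\<lambda>t. exp (\<i> * of_int d * complex_of_real t))"
      by (intro continuous_intros)
    fix x :: real
    have "((\<lambda>z. exp (\<i> * of_int d * z) / (\<i> * of_int d)) has_field_derivative
           exp (\<i> * of_int d * complex_of_real x)) (at (complex_of_real x))"
      using False by (auto intro!: derivative_eq_intros)
    from has_vector_derivative_real_field[OF this]
    show "((\<lambda>t. exp (\<i> * of_int d * complex_of_real t) / (\<i> * of_int d)) has_vector_derivative
           exp (\<i> * of_int d * complex_of_real x)) (at x within {min 0 (2 * pi)..max 0 (2 * pi)})"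
      by (simp add: has_vector_derivative_at_within)
  qed
  also have "exp (\<i> * of_int d * of_real (2*pi)) = 1"
    using exp_integer_2pi[of "of_int d"] by (simp add: mult_ac)
  finally show ?thesis using False by simp
qed

lemma integrable_torus_monomial:
  "integrable (torus_measure N) (\<lambda>\<theta>. \<Prod>i<N. a i * exp (\<i> * of_int (d i) * of_real (\<theta> i)))"
  unfolding torus_measure_def
  by (rule product_sigma_finite.product_integrable_prod[OF product_sigma_finite_circle, of "{..<N}"
        "\<lambda>i t. a i * exp (\<i> * of_int (d i) * of_real t)", simplified])
     (auto intro: integrable_circle_exp)

lemma integral_torus_monomial:
  "integral\<^sup>L (torus_measure N) (\<lambda>\<theta>. \<Prod>i<N. a i * exp (\<i> * of_int (d i) * of_real (\<theta> i)))
     = (\<Prod>i<N. a i * (if d i = 0 then 2*pi else 0))"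
  unfolding torus_measure_def
  by (subst product_sigma_finite.product_integral_prod[OF product_sigma_finite_circle, of "{..<N}"
        "\<lambda>i t. a i * exp (\<i> * of_int (d i) * of_real t)", simplified])
     (auto intro: integrable_circle_exp simp: integral_circle_exp)

definition torus_point :: "(nat \<Rightarrow> real) \<Rightarrow> nat \<Rightarrow> (nat \<Rightarrow> real) \<Rightarrow> nat \<Rightarrow> complex" where
  "torus_point eps N \<theta> = (\<lambda>j. if j < N then of_real (eps j) * exp (\<i> * of_real (\<theta> j)) else 0)"

definition torus_ratio ::
  "nat \<Rightarrow> (nat \<Rightarrow> real) \<Rightarrow> (nat \<Rightarrow> nat) \<Rightarrow> nat \<Rightarrow> (nat \<Rightarrow> real) \<Rightarrow> complex" where
  "torus_ratio N eps k K \<theta> =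
     fermatP (Suc N) k (torus_point eps N \<theta>) / (of_nat K * (\<Prod>j<N. torus_point eps N \<theta> j))"

lemma power_ratio_polar:
  assumes "e > 0"
  shows "(of_real e * exp (\<i> * of_real t)) ^ a / (of_real e * exp (\<i> * of_real t)) ^ m
         = of_real (e ^ a / e ^ m) * exp (\<i> * of_int (int a - int m) * of_real t)"
proof -
  have pow: "(of_real e * exp (\<i> * of_real t)) ^ j = of_real (e ^ j) * exp (of_nat j * (\<i> * of_real t))"
    for j by (simp add: power_mult_distrib exp_of_nat_mult)
  have "exp (of_nat a * (\<i> * of_real t)) / exp (of_nat m * (\<i> * of_real t))
        = exp (\<i> * of_int (int a - int m) * of_real t)"
    by (simp add: exp_diff[symmetric] algebra_simps)
  with assms show ?thesis unfolding pow by (simp add: field_simps)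
qed

lemma prod_word_letters:
  fixes y :: "nat \<Rightarrow> 'a::comm_monoid_mult"
  assumes "w \<in> PiE {..<m} (\<lambda>_. {..<n})"
  shows "(\<Prod>t<m. y (w t)) = (\<Prod>i<n. y i ^ letter_count m w i)"
proof -
  have "(\<Prod>t<m. y (w t)) = (\<Prod>i<n. prod (\<lambda>t. y (w t)) {t\<in>{..<m}. w t = i})"
    using assms by (intro prod.group[symmetric]) auto
  also have "\<dots> = (\<Prod>i<n. y i ^ letter_count m w i)"
    by (intro prod.cong refl) (simp add: letter_count_def)
  finally show ?thesis .
qed

text \<open>Expanding \<open>g^m = (\<Sum>i\<le>N y_i)^m / (K x_0 \<cdots> x_{N-1})^m\<close> over all words of length \<open>m\<close>
  (letters \<open>y_i = x_i^{k_i}\<close> for \<open>i < N\<close>, \<open>y_N = 1\<close>) writes it as a sum of Fourier monomials.\<close>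
lemma torus_ratio_power_expansion:
  assumes eps: "\<forall>j<N. eps j > 0"
  shows "torus_ratio N eps k K \<theta> ^ m = (\<Sum>w\<in>PiE {..<m} (\<lambda>_. {..<Suc N}).
           (1 / of_nat K ^ m) * (\<Prod>i<N. of_real (eps i ^ (k i * letter_count m w i) / eps i ^ m)
              * exp (\<i> * of_int (int (k i * letter_count m w i) - int m) * of_real (\<theta> i))))"
proof -
  define x where "x = torus_point eps N \<theta>"
  define y where "y i = (if i < N then x i ^ k i else 1)" for i
  have "fermatP (Suc N) k x ^ m = (\<Prod>t<m. \<Sum>i<Suc N. y i)"
    by (simp add: fermatP_def y_def)
  also have "\<dots> = (\<Sum>w\<in>PiE {..<m} (\<lambda>_. {..<Suc N}). \<Prod>t<m. y (w t))"
    by (rule prod_sum_PiE) auto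
  also have "\<dots> = (\<Sum>w\<in>PiE {..<m} (\<lambda>_. {..<Suc N}). \<Prod>i<N. x i ^ (k i * letter_count m w i))"
  proof (rule sum.cong[OF refl])
    fix w assume w: "w \<in> PiE {..<m} (\<lambda>_. {..<Suc N})"
    have "(\<Prod>t<m. y (w t)) = (\<Prod>i<Suc N. y i ^ letter_count m w i)"
      by (rule prod_word_letters[OF w])
    also have "\<dots> = (\<Prod>i<N. x i ^ (k i * letter_count m w i))"
      by (simp add: y_def power_mult)
    finally show "(\<Prod>t<m. y (w t)) = (\<Prod>i<N. x i ^ (k i * letter_count m w i))" .
  qed
  finally have num: "fermatP (Suc N) k x ^ m
      = (\<Sum>w\<in>PiE {..<m} (\<lambda>_. {..<Suc N}). \<Prod>i<N. x i ^ (k i * letter_count m w i))" .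
  have "torus_ratio N eps k K \<theta> ^ m = fermatP (Suc N) k x ^ m / (of_nat K ^ m * (\<Prod>j<N. x j ^ m))"
    unfolding torus_ratio_def x_def[symmetric]
    by (simp add: power_divide power_mult_distrib prod_power_distrib)
  also have "\<dots> = (\<Sum>w\<in>PiE {..<m} (\<lambda>_. {..<Suc N}).
      (1 / of_nat K ^ m) * (\<Prod>i<N. x i ^ (k i * letter_count m w i) / x i ^ m))"
    unfolding num sum_divide_distrib by (rule sum.cong[OF refl]) (simp add: prod_dividef)
  finally show ?thesis
    using eps by (simp add: x_def torus_point_def power_ratio_polar)
qed

lemma prod_fourier_means:
  assumes eps: "\<forall>j<N. eps j > 0"
  shows "(\<Prod>i<N. of_real (eps i ^ (k i * letter_count m w i) / eps i ^ m) *
            complex_of_real (if int (k i * letter_count m w i) - int m = 0 then 2 * pi else 0))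
         = (if \<forall>i<N. k i * letter_count m w i = m then (2 * complex_of_real pi) ^ N else 0)"
proof (cases "\<forall>i<N. k i * letter_count m w i = m")
  case True
  then have "(\<Prod>i<N. of_real (eps i ^ (k i * letter_count m w i) / eps i ^ m) *
            complex_of_real (if int (k i * letter_count m w i) - int m = 0 then 2 * pi else 0))
         = (\<Prod>i<N. 2 * complex_of_real pi)"
    using eps by (intro prod.cong) auto
  then show ?thesis using True by simp
next
  case False
  then obtain i where i: "i < N" "k i * letter_count m w i \<noteq> m" by auto
  then have "int (k i * letter_count m w i) - int m \<noteq> 0" by (metis eq_iff_diff_eq_0 of_nat_eq_iff)
  then have vanish: "(\<Prod>i<N. of_real (eps i ^ (k i * letter_count m w i) / eps i ^ m) *
            complex_of_real (if int (k i * letter_count m w i) - int m = 0 then 2 * pi else 0)) = 0"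
    using i(1) by (intro prod_zero[OF finite_lessThan] bexI[of _ i]) auto
  show ?thesis by (simp only: vanish False if_False)
qed

text \<open>The mean of \<open>g^m\<close> over the torus is \<open>c_m / K^m\<close>: integrating the expansion term by term,
  only the balanced words survive, and these are counted by \<open>c_m\<close>.\<close>
lemma integral_torus_ratio_power:
  assumes kpos: "\<forall>i<Suc N. k i > 0" and ksum: "(\<Sum>i<Suc N. 1 / real (k i)) = 1"
    and eps: "\<forall>j<N. eps j > 0"
  shows "integrable (torus_measure N) (\<lambda>\<theta>. torus_ratio N eps k K \<theta> ^ m)"
    and "integral\<^sup>L (torus_measure N) (\<lambda>\<theta>. torus_ratio N eps k K \<theta> ^ m)
           = of_real ((2*pi)^N / real K ^ m * coeff_c (Suc N) k m)"
proof -
  define W where "W = PiE {..<m} (\<lambda>_. {..<Suc N})"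
  define T where "T w = (\<lambda>\<theta>. (1 / of_nat K ^ m) *
      (\<Prod>i<N. of_real (eps i ^ (k i * letter_count m w i) / eps i ^ m)
              * exp (\<i> * of_int (int (k i * letter_count m w i) - int m) * of_real (\<theta> i))))" for w
  have expansion: "(\<lambda>\<theta>. torus_ratio N eps k K \<theta> ^ m) = (\<lambda>\<theta>. \<Sum>w\<in>W. T w \<theta>)"
    unfolding W_def T_def by (simp only: torus_ratio_power_expansion[OF eps])
  have intT: "integrable (torus_measure N) (T w)" for w
    unfolding T_def by (intro integrable_mult_right integrable_torus_monomial)
  have IT: "integral\<^sup>L (torus_measure N) (T w) = (1 / of_nat K ^ m) *
      (if \<forall>i<N. k i * letter_count m w i = m then (2 * complex_of_real pi) ^ N else 0)" for w
    by (simp only: T_def integral_mult_right_zero integral_torus_monomial prod_fourier_means[OF eps])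
  show "integrable (torus_measure N) (\<lambda>\<theta>. torus_ratio N eps k K \<theta> ^ m)"
    unfolding expansion using intT by (intro Bochner_Integration.integrable_sum) auto
  have "integral\<^sup>L (torus_measure N) (\<lambda>\<theta>. torus_ratio N eps k K \<theta> ^ m)
        = (\<Sum>w\<in>W. integral\<^sup>L (torus_measure N) (T w))"
    unfolding expansion using intT by (intro Bochner_Integration.integral_sum) auto
  also have "\<dots> = (\<Sum>w\<in>W. if \<forall>i<N. k i * letter_count m w i = m
                     then (1 / of_nat K ^ m) * (2 * complex_of_real pi) ^ N else 0)"
    unfolding IT by (rule sum.cong) auto
  also have "\<dots> = (\<Sum>w\<in>{w\<in>W. \<forall>i<N. k i * letter_count m w i = m}.
                     (1 / of_nat K ^ m) * (2 * complex_of_real pi) ^ N)"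
    by (rule sum.inter_filter[symmetric]) (simp add: W_def finite_PiE)
  also have "\<dots> = of_real ((2*pi)^N / real K ^ m *
                     real (card {w\<in>W. \<forall>i<N. k i * letter_count m w i = m}))"
    by simp
  finally show "integral\<^sup>L (torus_measure N) (\<lambda>\<theta>. torus_ratio N eps k K \<theta> ^ m)
           = of_real ((2*pi)^N / real K ^ m * coeff_c (Suc N) k m)"
    unfolding W_def card_balanced_words[OF kpos ksum] .
qed

lemma Ln_one_minus_sums:
  fixes w :: complex
  assumes "cmod w < 1"
  shows "(\<lambda>m. - (w ^ Suc m) / of_nat (Suc m)) sums Ln (1 - w)"
proof -
  have "cmod (- w) < 1" using assms by simp
  from Ln_series'[OF this] have "(\<lambda>n. - (w ^ n) / of_nat n) sums Ln (1 - w)" by simp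
  then show ?thesis by (subst sums_Suc_iff) simp
qed

lemma integral_Ln_one_minus_series:
  fixes f :: "'a \<Rightarrow> complex"
  assumes fin: "finite_measure M"
    and bound: "\<And>x. x \<in> space M \<Longrightarrow> cmod (f x) \<le> r" and r1: "r < 1"
    and int: "\<And>m. integrable M (\<lambda>x. f x ^ Suc m)"
  shows "integrable M (\<lambda>x. Ln (1 - f x))"
    and "(\<lambda>m. - integral\<^sup>L M (\<lambda>x. f x ^ Suc m) / of_nat (Suc m)) sums integral\<^sup>L M (\<lambda>x. Ln (1 - f x))"
proof -
  define q where "q = max r 0"
  have q: "0 \<le> q" "q < 1" using r1 by (auto simp: q_def)
  have fq: "cmod (f x) \<le> q" if "x \<in> space M" for x
    using bound[OF that] by (simp add: q_def)
  define F where "F m = (\<lambda>x. - (f x ^ Suc m) / of_nat (Suc m))" for m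
  have series: "(\<lambda>m. F m x) sums Ln (1 - f x)" if "x \<in> space M" for x
    unfolding F_def using fq[OF that] q by (intro Ln_one_minus_sums) simp
  have intF: "integrable M (F m)" for m
    unfolding F_def using int by simp
  have normF: "norm (F m x) \<le> q ^ Suc m" if "x \<in> space M" for m x
  proof -
    have "norm (F m x) = cmod (f x) ^ Suc m / real (Suc m)"
      by (simp only: F_def norm_divide norm_minus_cancel norm_power norm_of_nat)
    also have "\<dots> \<le> cmod (f x) ^ Suc m"
      using divide_left_mono[of 1 "real (Suc m)" "cmod (f x) ^ Suc m"] by simp
    also have "\<dots> \<le> q ^ Suc m" by (rule power_mono[OF fq[OF that]]) simp
    finally show ?thesis .
  qed
  have geometric: "summable (\<lambda>m. q ^ Suc m)"
    using q by (simp add: summable_geometric)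
  have pointwise: "AE x in M. summable (\<lambda>m. norm (F m x))"
    by (intro AE_I2 summable_comparison_test'[OF geometric]) (use normF in simp_all)
  have "norm (integral\<^sup>L M (\<lambda>x. norm (F m x))) \<le> measure M (space M) * q ^ Suc m" for m
  proof -
    have "integral\<^sup>L M (\<lambda>x. norm (F m x)) \<le> integral\<^sup>L M (\<lambda>x. q ^ Suc m)"
      by (intro integral_mono integrable_norm intF finite_measure.integrable_const[OF fin] normF)
    then show ?thesis by (simp add: integral_nonneg_AE)
  qed
  then have integrated: "summable (\<lambda>m. integral\<^sup>L M (\<lambda>x. norm (F m x)))"
    by (intro summable_comparison_test'[OF summable_mult[OF geometric]])
  have limit: "(\<Sum>m. F m x) = Ln (1 - f x)" if "x \<in> space M" for x
    using series[OF that] sums_unique by metis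
  have "integrable M (\<lambda>x. \<Sum>m. F m x) = integrable M (\<lambda>x. Ln (1 - f x))"
    using limit by (intro Bochner_Integration.integrable_cong) auto
  with integrable_suminf[OF intF pointwise integrated]
  show "integrable M (\<lambda>x. Ln (1 - f x))" by blast
  have "integral\<^sup>L M (\<lambda>x. \<Sum>m. F m x) = integral\<^sup>L M (\<lambda>x. Ln (1 - f x))"
    using limit by (intro Bochner_Integration.integral_cong) auto
  with sums_integral[OF intF pointwise integrated]
  have "(\<lambda>m. integral\<^sup>L M (F m)) sums integral\<^sup>L M (\<lambda>x. Ln (1 - f x))" by simp
  then show "(\<lambda>m. - integral\<^sup>L M (\<lambda>x. f x ^ Suc m) / of_nat (Suc m)) sums integral\<^sup>L M (\<lambda>x. Ln (1 - f x))"
    by (simp add: F_def)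
qed

lemma torus_ratio_le_Sup:
  assumes eps: "\<forall>j<N. eps j > 0" and Kpos: "K > 0"
  shows "cmod (torus_ratio N eps k K \<theta>)
           \<le> (SUP x\<in>torus N eps. cmod (fermatP (Suc N) k x / (of_nat K * (\<Prod>j<N. x j))))"
proof -
  have on_torus: "torus_point eps N \<theta> \<in> torus N eps"
    using eps by (auto simp: torus_point_def torus_def norm_mult)
  define B where "B = ((\<Sum>i<N. eps i ^ k i) + 1) / (real K * (\<Prod>j<N. eps j))"
  have "cmod (fermatP (Suc N) k x / (of_nat K * (\<Prod>j<N. x j))) \<le> B" if x: "x \<in> torus N eps" for x
  proof -
    have xn: "cmod (x j) = eps j" if "j < N" for j using x that by (simp add: torus_def)
    have "cmod (fermatP (Suc N) k x) \<le> (\<Sum>i<N. cmod (x i ^ k i)) + 1"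
      unfolding fermatP_def
      by (intro order.trans[OF norm_triangle_ineq] add_mono) (simp_all add: norm_sum)
    also have "(\<Sum>i<N. cmod (x i ^ k i)) = (\<Sum>i<N. eps i ^ k i)"
      by (rule sum.cong) (auto simp: norm_power xn)
    finally have num: "cmod (fermatP (Suc N) k x) \<le> (\<Sum>i<N. eps i ^ k i) + 1" .
    have den: "cmod (of_nat K * (\<Prod>j<N. x j)) = real K * (\<Prod>j<N. eps j)"
      by (simp add: norm_mult prod_norm[symmetric] xn)
    have "(\<Prod>j<N. eps j) > 0" using eps by (intro prod_pos) auto
    then show ?thesis
      unfolding B_def norm_divide den using Kpos by (intro divide_right_mono num) auto
  qed
  then have bdd: "bdd_above ((\<lambda>x. cmod (fermatP (Suc N) k x / (of_nat K * (\<Prod>j<N. x j)))) ` torus N eps)"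
    by (intro bdd_aboveI2) auto
  show ?thesis unfolding torus_ratio_def by (rule cSUP_upper[OF on_torus bdd])
qed

lemma integral_Ln_torus_series:
  fixes \<xi> :: complex
  assumes kpos: "\<forall>i<Suc N. k i > 0" and ksum: "(\<Sum>i<Suc N. 1 / real (k i)) = 1"
    and eps: "\<forall>j<N. eps j > 0" and Kpos: "K > 0"
    and small: "cmod \<xi> * (SUP x\<in>torus N eps. cmod (fermatP (Suc N) k x / (of_nat K * (\<Prod>j<N. x j)))) < 1"
  shows "integrable (torus_measure N) (\<lambda>\<theta>. Ln (1 - \<xi> * torus_ratio N eps k K \<theta>))"
    and "(\<lambda>m. of_real (coeff_c (Suc N) k (Suc m)) * \<xi> ^ Suc m / (of_nat (Suc m) * of_nat K ^ Suc m))
           sums (- integral\<^sup>L (torus_measure N) (\<lambda>\<theta>. Ln (1 - \<xi> * torus_ratio N eps k K \<theta>))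
                 / (2 * complex_of_real pi) ^ N)"
proof -
  let ?g = "torus_ratio N eps k K"
  have bound: "cmod (\<xi> * ?g \<theta>) \<le> cmod \<xi> *
      (SUP x\<in>torus N eps. cmod (fermatP (Suc N) k x / (of_nat K * (\<Prod>j<N. x j))))" for \<theta>
    by (simp add: norm_mult mult_left_mono torus_ratio_le_Sup[OF eps Kpos])
  have powers: "(\<lambda>\<theta>. (\<xi> * ?g \<theta>) ^ Suc m) = (\<lambda>\<theta>. \<xi> ^ Suc m * ?g \<theta> ^ Suc m)" for m
    by (simp only: power_mult_distrib)
  have int: "integrable (torus_measure N) (\<lambda>\<theta>. (\<xi> * ?g \<theta>) ^ Suc m)" for m
    unfolding powers by (intro integrable_mult_right integral_torus_ratio_power(1)[OF kpos ksum eps])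
  note series = integral_Ln_one_minus_series[OF finite_measure_torus bound small int]
  show "integrable (torus_measure N) (\<lambda>\<theta>. Ln (1 - \<xi> * ?g \<theta>))" by (rule series(1))
  have mean_power: "integral\<^sup>L (torus_measure N) (\<lambda>\<theta>. (\<xi> * ?g \<theta>) ^ Suc m)
        = \<xi> ^ Suc m * of_real ((2*pi)^N / real K ^ Suc m * coeff_c (Suc N) k (Suc m))" for m
    by (simp only: powers integral_mult_right_zero integral_torus_ratio_power(2)[OF kpos ksum eps])
  have "- integral\<^sup>L (torus_measure N) (\<lambda>\<theta>. (\<xi> * ?g \<theta>) ^ Suc m) / of_nat (Suc m)
          * (- 1 / (2 * complex_of_real pi) ^ N)
        = of_real (coeff_c (Suc N) k (Suc m)) * \<xi> ^ Suc m / (of_nat (Suc m) * of_nat K ^ Suc m)" for m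
    unfolding mean_power using Kpos by (simp add: field_simps)
  with sums_mult2[OF series(2), of "- 1 / (2 * complex_of_real pi) ^ N"]
  show "(\<lambda>m. of_real (coeff_c (Suc N) k (Suc m)) * \<xi> ^ Suc m / (of_nat (Suc m) * of_nat K ^ Suc m))
           sums (- integral\<^sup>L (torus_measure N) (\<lambda>\<theta>. Ln (1 - \<xi> * ?g \<theta>)) / (2 * complex_of_real pi) ^ N)"
    by simp
qed

lemma contour_integral_as_torus_mean:
  assumes eps: "\<forall>j<N. eps j > 0"
    and int: "integrable (torus_measure N) (\<lambda>\<theta>. Ln (1 - \<xi> * torus_ratio N eps k K \<theta>))"
  shows "(1 / (2 * complex_of_real pi * \<i>) ^ N) * torus_contour_integral N eps
           (\<lambda>x. (L + Ln (1 - \<xi> * fermatP (Suc N) k x / (of_nat K * (\<Prod>j<N. x j)))) / (\<Prod>j<N. x j))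
         = L + integral\<^sup>L (torus_measure N) (\<lambda>\<theta>. Ln (1 - \<xi> * torus_ratio N eps k K \<theta>))
               / (2 * complex_of_real pi) ^ N"
proof -
  define J where "J = integral\<^sup>L (torus_measure N) (\<lambda>\<theta>. Ln (1 - \<xi> * torus_ratio N eps k K \<theta>))"
  have jacobian: "(\<Prod>j<N. \<i> * complex_of_real (eps j) * exp (\<i> * complex_of_real (\<theta> j)))
                  = \<i> ^ N * (\<Prod>j<N. torus_point eps N \<theta> j)" for \<theta>
    by (simp add: torus_point_def prod.distrib mult.assoc)
  have nonzero: "(\<Prod>j<N. torus_point eps N \<theta> j) \<noteq> 0" for \<theta>
    using eps by (auto simp: torus_point_def)
  have "torus_contour_integral N eps
          (\<lambda>x. (L + Ln (1 - \<xi> * fermatP (Suc N) k x / (of_nat K * (\<Prod>j<N. x j)))) / (\<Prod>j<N. x j))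
        = integral\<^sup>L (torus_measure N) (\<lambda>\<theta>. \<i> ^ N * (L + Ln (1 - \<xi> * torus_ratio N eps k K \<theta>)))"
    unfolding torus_contour_integral_def torus_measure_def circle_measure_def
      torus_point_def[symmetric] jacobian
    using nonzero by (simp add: torus_ratio_def)
  also have "\<dots> = \<i> ^ N * ((2 * complex_of_real pi) ^ N * L + J)"
    using Bochner_Integration.integral_add[OF finite_measure.integrable_const[OF finite_measure_torus] int]
    by (simp add: J_def measure_torus_space scaleR_conv_of_real)
  finally show ?thesis
    unfolding J_def[symmetric] by (simp add: power_mult_distrib field_simps)
qed

lemma sums_sparse_reindex:
  fixes f :: "nat \<Rightarrow> 'a::real_normed_vector"
  assumes K: "K > 0" and sums: "f sums S" and sparse: "\<And>n. \<not> K dvd Suc n \<Longrightarrow> f n = 0"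
  shows "(\<lambda>j. f (K * Suc j - 1)) sums S"
proof -
  define g where "g j = K * Suc j - 1" for j
  have Suc_g: "Suc (g j) = K * Suc j" for j using K by (simp add: g_def)
  have "strict_mono g"
    unfolding strict_mono_Suc_iff using Suc_g K by (metis Suc_less_eq mult_less_mono2 lessI)
  moreover have "f n = 0" if "n \<notin> range g" for n
  proof (rule sparse)
    show "\<not> K dvd Suc n"
    proof
      assume "K dvd Suc n"
      then obtain j where "Suc n = K * Suc j" by (metis dvdE mult_0_right nat.distinct(1) not0_implies_Suc)
      then have "n = g j" using Suc_g[of j] by simp
      then show False using that by auto
    qed
  qed
  ultimately show ?thesis using sums_mono_reindex sums unfolding g_def by blast
qed

lemma rescale_power_term:
  fixes C X :: "'a::field_char_0"
  assumes "K > 0" "s > 0"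
  shows "of_nat K * (C * X ^ (K * s) / (of_nat (K * s) * of_nat K ^ (K * s)))
         = C * (X ^ K / of_nat K ^ K) ^ s / of_nat s"
proof -
  have nonzero: "(of_nat K :: 'a) \<noteq> 0" "(of_nat s :: 'a) \<noteq> 0" "(of_nat K ^ K :: 'a) ^ s \<noteq> 0"
    using assms by auto
  have "of_nat K * (C * X ^ (K * s) / (of_nat (K * s) * of_nat K ^ (K * s)))
        = of_nat K * (C * (X ^ K) ^ s / (of_nat K * of_nat s * (of_nat K ^ K) ^ s))"
    by (simp only: power_mult of_nat_mult)
  also have "\<dots> = C * ((X ^ K) ^ s / (of_nat K ^ K) ^ s) / of_nat s"
    using nonzero by (simp add: field_simps)
  finally show ?thesis by (simp only: power_divide)
qed

lemma series_in_z:
  fixes \<xi> S :: complex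
  assumes kpos: "\<forall>i<Suc N. k i > 0" and K_def: "K = lcmk (Suc N) k"
    and S: "(\<lambda>m. of_real (coeff_c (Suc N) k (Suc m)) * \<xi> ^ Suc m / (of_nat (Suc m) * of_nat K ^ Suc m))
              sums S"
  shows "(\<lambda>j. of_real (fact (K * Suc j) / (\<Prod>i<Suc N. fact ((K div k i) * Suc j)))
              * (\<xi> ^ K / of_nat K ^ K) ^ Suc j / of_nat (Suc j)) sums (of_nat K * S)"
proof -
  have Kpos: "K > 0" using lcmk_pos[OF kpos] K_def by simp
  define a where "a = (\<lambda>m. of_nat K * (of_real (coeff_c (Suc N) k (Suc m)) * \<xi> ^ Suc m
                          / (of_nat (Suc m) * of_nat K ^ Suc m)))"
  have "a sums (of_nat K * S)" unfolding a_def by (rule sums_mult[OF S])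
  moreover have "a n = 0" if "\<not> K dvd Suc n" for n
    using that by (simp add: a_def coeff_c_def K_def)
  ultimately have "(\<lambda>j. a (K * Suc j - 1)) sums (of_nat K * S)"
    by (rule sums_sparse_reindex[OF Kpos])
  moreover have "a (K * Suc j - 1) = of_real (fact (K * Suc j) / (\<Prod>i<Suc N. fact ((K div k i) * Suc j)))
              * (\<xi> ^ K / of_nat K ^ K) ^ Suc j / of_nat (Suc j)" for j
  proof -
    have "k i dvd K" if "i < Suc N" for i
      using that unfolding K_def lcmk_def by (simp add: dvd_Lcm)
    then have "(\<Prod>i<Suc N. fact (K * Suc j div k i) :: real) = (\<Prod>i<Suc N. fact ((K div k i) * Suc j))"
      by (intro prod.cong) (auto simp: div_mult_swap mult.commute)
    then have coeff: "coeff_c (Suc N) k (K * Suc j)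
                      = fact (K * Suc j) / (\<Prod>i<Suc N. fact ((K div k i) * Suc j))"
      by (simp add: coeff_c_def K_def)
    have "Suc (K * Suc j - 1) = K * Suc j" using Kpos by simp
    then have "a (K * Suc j - 1) = of_nat K * (of_real (coeff_c (Suc N) k (K * Suc j)) * \<xi> ^ (K * Suc j)
                 / (of_nat (K * Suc j) * of_nat K ^ (K * Suc j)))"
      unfolding a_def by (simp only:)
    also have "\<dots> = of_real (fact (K * Suc j) / (\<Prod>i<Suc N. fact ((K div k i) * Suc j)))
              * (\<xi> ^ K / of_nat K ^ K) ^ Suc j / of_nat (Suc j)"
      unfolding coeff by (rule rescale_power_term[OF Kpos zero_less_Suc])
    finally show ?thesis .
  qed
  ultimately show ?thesis by (simp only:)
qed

text \<open>Main theorem: with \<open>N = n - 1\<close> and \<open>S = - (mean of Ln (1 - \<xi> g))\<close>, the normalised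
  contour integral equals \<open>L - S\<close>, hence \<open>M = e^{-L} e^S = \<xi> e^S\<close>; raising to the \<open>K\<close>-th power
  gives the series in \<open>z\<close>.\<close>
theorem mainTheorem3:
  fixes n :: nat and k :: "nat \<Rightarrow> nat" and eps :: "nat \<Rightarrow> real"
    and \<psi> \<xi> L :: complex
  assumes n2: "n \<ge> 2"
    and kpos: "\<forall>i<n. k i > 0"
    and ksum: "(\<Sum>i<n. 1 / real (k i)) = 1"
    and epspos: "\<forall>j<n-1. eps j > 0"
    and psi_nz: "\<psi> \<noteq> 0"
    and xi_def: "\<xi> = inverse \<psi>"
    and L_log: "exp L = \<psi>"
    and small: "cmod \<xi> * (SUP x\<in>torus (n-1) eps.
                   cmod (fermatP n k x / (of_nat (lcmk n k) * (\<Prod>j<n-1. x j)))) < 1"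
  shows "let K = lcmk n k;
             Mt = exp (- (1 / (2 * complex_of_real pi * \<i>) ^ (n-1)) *
                    torus_contour_integral (n-1) eps
                      (\<lambda>x. (L + Ln (1 - \<xi> * fermatP n k x / (of_nat K * (\<Prod>j<n-1. x j))))
                           / (\<Prod>j<n-1. x j)));
             z = \<xi> ^ K / of_nat K ^ K
         in (\<exists>S. (\<lambda>m. complex_of_real (coeff_c n k (Suc m)) * \<xi> ^ Suc m
                        / (of_nat (Suc m) * of_nat K ^ Suc m)) sums S
                 \<and> Mt = \<xi> * exp S)
          \<and> (\<exists>T. (\<lambda>m. complex_of_real (fact (K * Suc m) / (\<Prod>i<n. fact ((K div k i) * Suc m)))
                        * z ^ Suc m / of_nat (Suc m)) sums T
                 \<and> Mt ^ K / of_nat K ^ K = z * exp T)"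
proof -
  obtain N where n: "n = Suc N" using n2 by (cases n) auto
  define K where "K = lcmk n k"
  have Kpos: "K > 0" using lcmk_pos[OF kpos] by (simp add: K_def)
  define J where "J = integral\<^sup>L (torus_measure N) (\<lambda>\<theta>. Ln (1 - \<xi> * torus_ratio N eps k K \<theta>))"
  define S where "S = - J / (2 * complex_of_real pi) ^ N"
  note mean = integral_Ln_torus_series[of N k eps K \<xi>, folded J_def S_def]
  have S: "(\<lambda>m. of_real (coeff_c n k (Suc m)) * \<xi> ^ Suc m / (of_nat (Suc m) * of_nat K ^ Suc m)) sums S"
    using mean(2) kpos ksum epspos Kpos small by (simp add: n K_def)
  have contour: "(1 / (2 * complex_of_real pi * \<i>) ^ N) * torus_contour_integral N eps
      (\<lambda>x. (L + Ln (1 - \<xi> * fermatP n k x / (of_nat K * (\<Prod>j<N. x j)))) / (\<Prod>j<N. x j)) = L - S"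
    using contour_integral_as_torus_mean[of N eps \<xi> k K L] mean(1) kpos ksum epspos Kpos small
    by (simp add: n K_def S_def J_def)
  have "exp (- L) = \<xi>" using L_log xi_def by (simp add: exp_minus)
  moreover have "- (L - S) = S + - L" by simp
  ultimately have Mt: "exp (- (L - S)) = \<xi> * exp S" by (simp only: exp_add mult.commute)
  have "(\<xi> * exp S) ^ K / of_nat K ^ K = \<xi> ^ K / of_nat K ^ K * exp (of_nat K * S)"
    by (simp add: exp_of_nat_mult power_mult_distrib)
  with S Mt contour series_in_z[of N k K \<xi> S] kpos show ?thesis
    unfolding Let_def K_def[symmetric] by (auto simp: n K_def)
qed

end
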